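(* For all positive integers $m$ and $n$ and every sequence $(a_i\colon i\in\mathbb{N})$ of positive integers, there is a bound $N$ (depending only on $m$, $n$ and the sequence) such that every strictly increasing chain $S_0\subsetneq S_1\subsetneq S_2\subsetneq\cdots$ of antichains $S_k$ of $(\mathbb{N}^m\times n,\le)$ satisfying $S_k\subseteq\{(\xi,h)\colon|\xi|\le a_k\}$ for each $k$ has length at most $N$.
   Context: $n$ denotes $\{0,\dots,n-1\}$; $\le$ is the product (componentwise) order on $\mathbb{N}^m\times n$; for $\xi\in\mathbb{N}^m$, $|\xi|=\sum_{i<m}\xi(i)$. An antichain is a set of pairwise $\le$-incomparable elements. *)

theory Defs
  imports Main
begin

text \<open>Elements of N^m x n are pairs (xi, h) with xi :: nat => nat vanishing
  outside {0..<m} and h < n.\<close>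

definition grid :: "nat \<Rightarrow> nat \<Rightarrow> ((nat \<Rightarrow> nat) \<times> nat) set" where
  "grid m n = {(xi, h). (\<forall>i\<ge>m. xi i = 0) \<and> h < n}"

definition prod_le :: "nat \<Rightarrow> (nat \<Rightarrow> nat) \<times> nat \<Rightarrow> (nat \<Rightarrow> nat) \<times> nat \<Rightarrow> bool" where
  "prod_le m x y \<longleftrightarrow> (\<forall>i<m. fst x i \<le> fst y i) \<and> snd x \<le> snd y"

definition weight :: "nat \<Rightarrow> (nat \<Rightarrow> nat) \<Rightarrow> nat" where
  "weight m xi = (\<Sum>i<m. xi i)"

definition antichain_in :: "nat \<Rightarrow> ((nat \<Rightarrow> nat) \<times> nat) set \<Rightarrow> bool" where
  "antichain_in m S \<longleftrightarrow> (\<forall>x\<in>S. \<forall>y\<in>S. x \<noteq> y \<longrightarrow> \<not> prod_le m x y)"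

end

theory Submission
  imports Defs Complex_Main
begin

text \<open>Pick y_k \<in> S_(k+1) - S_k. The sequence y_0, ..., y_(L-1) is bad: no y_i lies below a
  later y_j, since both belong to the antichain S_(j+1). Its entries are drawn from the finite
  sets {(\<xi>, h). |\<xi>| \<le> a_(j+1)}, so the bad sequences obeying these bounds form a finitely
  branching tree. If this tree had arbitrarily long branches, Koenig's lemma would give an
  infinite bad sequence in N^m \<times> n, contradicting Dickson's lemma.\<close>

lemma incseq_subseq_nat:
  fixes s :: "nat \<Rightarrow> nat"
  obtains g where "strict_mono g" "incseq (\<lambda>k. s (g k))"
proof -
  obtain f where f: "strict_mono f" "monoseq (\<lambda>k. s (f k))"
    using seq_monosub by blast
  show thesis
  proof (cases "incseq (\<lambda>k. s (f k))")
    case True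
    with f(1) show thesis by (rule that)
  next
    case False
    with f(2) have dec: "decseq (\<lambda>k. s (f k))"
      by (simp add: monoseq_iff)
    obtain N where N: "\<And>k. s (f N) \<le> s (f k)"
      using ex_has_least_nat[of "\<lambda>_. True" 0 "\<lambda>k. s (f k)"] by auto
    have const: "s (f (k + N)) = s (f N)" for k
      using N[of "k + N"] decseqD[OF dec, of N "k + N"] by simp
    have "strict_mono (\<lambda>k. f (k + N))"
      using f(1) by (simp add: strict_mono_def)
    moreover have "incseq (\<lambda>k. s (f (k + N)))"
      by (simp add: const incseq_def)
    ultimately show thesis by (rule that)
  qed
qed

lemma incseq_subseq_nat_finite_family:
  fixes s :: "nat \<Rightarrow> nat \<Rightarrow> nat"
  shows "\<exists>g. strict_mono g \<and> (\<forall>i<r. incseq (\<lambda>k. s i (g k)))"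
proof (induction r)
  case 0
  have "strict_mono (id :: nat \<Rightarrow> nat)" by (simp add: strict_mono_def)
  then show ?case by blast
next
  case (Suc r)
  then obtain g where g: "strict_mono g" "\<forall>i<r. incseq (\<lambda>k. s i (g k))"
    by blast
  obtain h where h: "strict_mono h" "incseq (\<lambda>k. s r (g (h k)))"
    using incseq_subseq_nat[of "\<lambda>k. s r (g k)"] by blast
  have "strict_mono (\<lambda>k. g (h k))"
    using g(1) h(1) by (simp add: strict_mono_def)
  moreover have "incseq (\<lambda>k. s i (g (h k)))" if "i < Suc r" for i
  proof (cases "i < r")
    case True
    with g(2) h(1) show ?thesis
      by (simp add: incseq_def strict_mono_less_eq)
  next
    case False
    with that have "i = r" by simp
    with h(2) show ?thesis by simp
  qed
  ultimately show ?case
    by blast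
qed

lemma dickson:
  fixes f :: "nat \<Rightarrow> (nat \<Rightarrow> nat) \<times> nat"
  shows "\<exists>i j. i < j \<and> prod_le m (f i) (f j)"
proof -
  define s where "s i k = (if i < m then fst (f k) i else snd (f k))" for i k
  obtain g where g: "strict_mono g" "\<forall>i<Suc m. incseq (\<lambda>k. s i (g k))"
    using incseq_subseq_nat_finite_family[of "Suc m" s] by blast
  have le: "s i (g 0) \<le> s i (g 1)" if "i \<le> m" for i
    using g(2) that by (simp add: incseq_def)
  have "fst (f (g 0)) i \<le> fst (f (g 1)) i" if "i < m" for i
    using le[of i] that by (simp add: s_def)
  moreover have "snd (f (g 0)) \<le> snd (f (g 1))"
    using le[of m] by (simp add: s_def)
  ultimately have "prod_le m (f (g 0)) (f (g 1))"
    by (simp add: prod_le_def)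
  moreover have "g 0 < g 1"
    using g(1) by (simp add: strict_mono_def)
  ultimately show ?thesis by blast
qed

lemma koenig:
  fixes T :: "'a list set"
  assumes prefix_closed: "\<And>xs ys. xs @ ys \<in> T \<Longrightarrow> xs \<in> T"
    and finitely_branching: "\<And>xs. finite {c. xs @ [c] \<in> T}"
    and unbounded: "\<And>N. \<exists>xs\<in>T. N \<le> length xs"
  shows "\<exists>f. \<forall>k. map f [0..<k] \<in> T"
proof -
  define extendable where
    "extendable xs \<longleftrightarrow> (\<forall>N. \<exists>zs. xs @ zs \<in> T \<and> N \<le> length zs)" for xs
  have step: "\<exists>c. extendable (xs @ [c])" if ext: "extendable xs" for xs
  proof (rule ccontr)
    assume "\<nexists>c. extendable (xs @ [c])"
    then obtain bound where bound: "\<And>c zs. xs @ [c] @ zs \<in> T \<Longrightarrow> length zs < bound c"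
      unfolding extendable_def by (metis append_assoc not_le)
    define C where "C = {c. xs @ [c] \<in> T}"
    obtain zs where zs: "xs @ zs \<in> T" "Suc (Max (bound ` C)) \<le> length zs"
      using ext unfolding extendable_def by blast
    then obtain c zs' where c: "zs = c # zs'"
      by (cases zs) auto
    with zs(1) have "c \<in> C"
      unfolding C_def using prefix_closed[of "xs @ [c]" zs'] by simp
    then have "bound c \<le> Max (bound ` C)"
      using finitely_branching by (simp add: C_def)
    moreover have "length zs' < bound c"
      using bound[of c zs'] zs(1) c by simp
    ultimately show False
      using zs(2) c by simp
  qed
  define next_elem where "next_elem xs = (SOME c. extendable (xs @ [c]))" for xs
  define path where "path k = ((\<lambda>xs. xs @ [next_elem xs]) ^^ k) []" for k
  have path_simps: "path 0 = []" "path (Suc k) = path k @ [next_elem (path k)]" for k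
    by (simp_all add: path_def)
  have "extendable []"
    using unbounded by (auto simp: extendable_def)
  then have extendable_path: "extendable (path k)" for k
    by (induction k) (use step in \<open>auto simp: path_simps next_elem_def intro: someI_ex\<close>)
  define f where "f k = next_elem (path k)" for k
  have "path k = map f [0..<k]" for k
    by (induction k) (simp_all add: f_def path_simps)
  moreover have "path k \<in> T" for k
    using extendable_path[of k] prefix_closed unfolding extendable_def by blast
  ultimately show ?thesis by auto
qed

definition bounded_grid :: "nat \<Rightarrow> nat \<Rightarrow> nat \<Rightarrow> ((nat \<Rightarrow> nat) \<times> nat) set" where
  "bounded_grid m n B = {x \<in> grid m n. weight m (fst x) \<le> B}"

lemma finite_bounded_grid: "finite (bounded_grid m n B)"
proof (rule finite_subset)
  let ?F = "{xi. \<forall>i. (i \<in> {..<m} \<longrightarrow> xi i \<in> {..B}) \<and> (i \<notin> {..<m} \<longrightarrow> xi i = 0)}"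
  show "finite (?F \<times> {..<n})"
    by (intro finite_cartesian_product finite_set_of_finite_funs) auto
  have "xi i \<le> B" if "weight m xi \<le> B" "i < m" for xi i
    using member_le_sum[of i "{..<m}" xi] that by (simp add: weight_def)
  then show "bounded_grid m n B \<subseteq> ?F \<times> {..<n}"
    by (auto simp: bounded_grid_def grid_def)
qed

definition bad_seqs :: "nat \<Rightarrow> nat \<Rightarrow> (nat \<Rightarrow> nat) \<Rightarrow> ((nat \<Rightarrow> nat) \<times> nat) list set" where
  "bad_seqs m n b = {ys. \<forall>j<length ys. ys ! j \<in> bounded_grid m n (b j)
                          \<and> (\<forall>i<j. \<not> prod_le m (ys ! i) (ys ! j))}"

lemma bad_seqs_prefix:
  assumes "xs @ ys \<in> bad_seqs m n b"
  shows "xs \<in> bad_seqs m n b"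
  unfolding bad_seqs_def
proof (intro CollectI allI impI)
  fix j assume j: "j < length xs"
  have prefix_nth: "(xs @ ys) ! i = xs ! i" if "i \<le> j" for i
    using that j by (simp add: nth_append)
  from assms j have "(xs @ ys) ! j \<in> bounded_grid m n (b j)
      \<and> (\<forall>i<j. \<not> prod_le m ((xs @ ys) ! i) ((xs @ ys) ! j))"
    unfolding bad_seqs_def by simp
  then show "xs ! j \<in> bounded_grid m n (b j) \<and> (\<forall>i<j. \<not> prod_le m (xs ! i) (xs ! j))"
    by (simp add: prefix_nth)
qed

lemma finite_bad_seqs_extensions: "finite {c. xs @ [c] \<in> bad_seqs m n b}"
proof (rule finite_subset)
  show "{c. xs @ [c] \<in> bad_seqs m n b} \<subseteq> bounded_grid m n (b (length xs))"
    by (auto simp: bad_seqs_def dest!: spec[of _ "length xs"])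
qed (rule finite_bounded_grid)

lemma bad_seqs_length_bounded: "\<exists>N. \<forall>ys\<in>bad_seqs m n b. length ys \<le> N"
proof (rule ccontr)
  assume "\<nexists>N. \<forall>ys\<in>bad_seqs m n b. length ys \<le> N"
  then have long: "\<exists>ys\<in>bad_seqs m n b. N \<le> length ys" for N
    by (meson nle_le)
  have "\<exists>f. \<forall>k. map f [0..<k] \<in> bad_seqs m n b"
    by (rule koenig[OF _ finite_bad_seqs_extensions long]) (rule bad_seqs_prefix)
  then obtain f where f: "\<And>k. map f [0..<k] \<in> bad_seqs m n b"
    by blast
  obtain i j where "i < j" "prod_le m (f i) (f j)"
    using dickson by blast
  with f[of "Suc j"] show False
    by (auto simp: bad_seqs_def simp del: upt_Suc)
qed

lemma strict_chain_mono:
  fixes S :: "nat \<Rightarrow> 'a set"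
  assumes "\<forall>k<L. S k \<subset> S (Suc k)" and "i \<le> j" and "j \<le> L"
  shows "S i \<subseteq> S j"
  using assms(2,3)
proof (induction j rule: dec_induct)
  case (step k)
  then have "S k \<subset> S (Suc k)"
    using assms(1) by simp
  with step show ?case by auto
qed simp

lemma strict_chain_of_antichains_bad_seq:
  assumes antichains: "\<forall>k\<le>L. S k \<subseteq> grid m n \<and> antichain_in m (S k)
                              \<and> S k \<subseteq> {(xi, h). weight m xi \<le> a k}"
    and strict: "\<forall>k<L. S k \<subset> S (Suc k)"
  shows "\<exists>ys\<in>bad_seqs m n (\<lambda>j. a (Suc j)). length ys = L"
proof -
  have "\<forall>k<L. \<exists>y. y \<in> S (Suc k) - S k"
    using strict by blast
  then obtain y where y: "\<And>k. k < L \<Longrightarrow> y k \<in> S (Suc k) - S k"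
    by metis
  have "map y [0..<L] \<in> bad_seqs m n (\<lambda>j. a (Suc j))"
    unfolding bad_seqs_def
  proof (intro CollectI allI impI conjI)
    fix j assume "j < length (map y [0..<L])"
    then have j: "j < L" by simp
    have S: "S (Suc j) \<subseteq> grid m n" "antichain_in m (S (Suc j))"
      "S (Suc j) \<subseteq> {(xi, h). weight m xi \<le> a (Suc j)}"
      using antichains j by auto
    show "map y [0..<L] ! j \<in> bounded_grid m n (a (Suc j))"
      using y[OF j] S(1,3) j by (cases "y j") (auto simp: bounded_grid_def)
    fix i assume "i < j"
    have "y i \<in> S (Suc i)" "S (Suc i) \<subseteq> S j" "S j \<subseteq> S (Suc j)"
      using y[of i] strict_chain_mono[OF strict, of "Suc i" j] strict \<open>i < j\<close> j by auto
    then have "y i \<in> S (Suc j)" "y i \<noteq> y j"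
      using y[OF j] by auto
    then show "\<not> prod_le m (map y [0..<L] ! i) (map y [0..<L] ! j)"
      using y[OF j] S(2) \<open>i < j\<close> j unfolding antichain_in_def by simp
  qed
  then show ?thesis by force
qed

theorem lemma4p9:
  fixes m n :: nat and a :: "nat \<Rightarrow> nat"
  assumes "m > 0" and "n > 0" and "\<forall>i. a i > 0"
  shows "\<exists>N::nat. \<forall>(L::nat) (S :: nat \<Rightarrow> ((nat \<Rightarrow> nat) \<times> nat) set).
           (\<forall>k\<le>L. S k \<subseteq> grid m n \<and> antichain_in m (S k)
                    \<and> S k \<subseteq> {(xi, h). weight m xi \<le> a k})
         \<and> (\<forall>k<L. S k \<subset> S (Suc k))
         \<longrightarrow> L \<le> N"
proof -
  obtain N where N: "\<forall>ys\<in>bad_seqs m n (\<lambda>j. a (Suc j)). length ys \<le> N"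
    using bad_seqs_length_bounded by blast
  show ?thesis
  proof (intro exI[of _ N] allI impI)
    fix L and S :: "nat \<Rightarrow> ((nat \<Rightarrow> nat) \<times> nat) set"
    assume chain: "(\<forall>k\<le>L. S k \<subseteq> grid m n \<and> antichain_in m (S k)
                    \<and> S k \<subseteq> {(xi, h). weight m xi \<le> a k})
         \<and> (\<forall>k<L. S k \<subset> S (Suc k))"
    obtain ys where ys: "ys \<in> bad_seqs m n (\<lambda>j. a (Suc j))" "length ys = L"
      using strict_chain_of_antichains_bad_seq[OF chain[THEN conjunct1] chain[THEN conjunct2]]
      by blast
    show "L \<le> N"
      using N ys by blast
  qed
qed

end
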